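(* Let $d\ge1$, $n\ge3$, $u\in\mathbb{C}\setminus\{0\}$. In $\mathrm{Y}_{d,n}(u)$: (1) $g_1c_{1,2}=[1+(u-1)e_1]c_{1,2}$; (2) $g_2c_{1,2}=[1+(u-1)e_2]c_{1,2}$; (3) $g_1g_2c_{1,2}=[1+(u-1)e_1+(u-1)e_{1,3}+(u-1)^2e_1e_2]c_{1,2}$; (4) $g_2g_1c_{1,2}=[1+(u-1)e_2+(u-1)e_{1,3}+(u-1)^2e_1e_2]c_{1,2}$; (5) $g_1g_2g_1c_{1,2}=[1+(u-1)(e_1+e_2+e_{1,3})+(u-1)^2(u+2)e_1e_2]c_{1,2}$.
   Context: The Yokonuma–Hecke algebra $\mathrm{Y}_{d,n}(u)$ is the unital associative $\mathbb{C}$-algebra with generators $g_1,\ldots,g_{n-1},t_1,\ldots,t_n$ and relations: $g_ig_j=g_jg_i$ for $|i-j|>1$; $g_{i+1}g_ig_{i+1}=g_ig_{i+1}g_i$; $t_it_j=t_jt_i$; $t_i^d=1$; $g_it_i=t_{i+1}g_i$; $g_it_{i+1}=t_ig_i$; $g_it_j=t_jg_i$ for $j\ne i,i+1$; $g_i^2=1+(u-1)e_i+(u-1)e_ig_i$, where $e_i=\frac1d\sum_{s=0}^{d-1}t_i^st_{i+1}^{d-s}$. Also $e_{i,j}=\frac1d\sum_{s=0}^{d-1}t_i^st_j^{d-s}$. For $w\in S_n$ with reduced expression $s_{i_1}\cdots s_{i_k}$ put $g_w=g_{i_1}\cdots g_{i_k}$; $g_{1,2}=\sum_{w\in S_3}g_w$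 and $c_{1,2}=\sum_{a,b,c=0}^{d-1}t_1^at_2^bt_3^c\,g_{1,2}$. *)

theory Defs
  imports Complex_Main
begin

text \<open>A unital associative C-algebra is modelled as a unital ring 'a together with
  a central unital ring homomorphism sc from the complex numbers (the scalars).\<close>

definition cplx_alg :: "(complex \<Rightarrow> 'a::ring_1) \<Rightarrow> bool" where
  "cplx_alg sc \<longleftrightarrow> sc 1 = 1 \<and> (\<forall>x y. sc (x + y) = sc x + sc y)
     \<and> (\<forall>x y. sc (x * y) = sc x * sc y) \<and> (\<forall>x a. sc x * a = a * sc x)"

definition yh_e :: "(complex \<Rightarrow> 'a::ring_1) \<Rightarrow> nat \<Rightarrow> (nat \<Rightarrow> 'a) \<Rightarrow> nat \<Rightarrow> nat \<Rightarrow> 'a" where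
  "yh_e sc d t i j = sc (1 / of_nat d) * (\<Sum>s<d. t i ^ s * t j ^ (d - s))"

definition yh_rels :: "(complex \<Rightarrow> 'a::ring_1) \<Rightarrow> nat \<Rightarrow> nat \<Rightarrow> complex
     \<Rightarrow> (nat \<Rightarrow> 'a) \<Rightarrow> (nat \<Rightarrow> 'a) \<Rightarrow> bool" where
  "yh_rels sc d n u g t \<longleftrightarrow>
     (\<forall>i j. 1 \<le> i \<and> i \<le> n - 1 \<and> 1 \<le> j \<and> j \<le> n - 1 \<and> (i + 1 < j \<or> j + 1 < i)
        \<longrightarrow> g i * g j = g j * g i)
   \<and> (\<forall>i. 1 \<le> i \<and> i + 1 \<le> n - 1 \<longrightarrow> g (i+1) * g i * g (i+1) = g i * g (i+1) * g i)
   \<and> (\<forall>i j. 1 \<le> i \<and> i \<le> n \<and> 1 \<le> j \<and> j \<le> n \<longrightarrow> t i * t j = t j * t i)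
   \<and> (\<forall>i. 1 \<le> i \<and> i \<le> n \<longrightarrow> t i ^ d = 1)
   \<and> (\<forall>i. 1 \<le> i \<and> i \<le> n - 1 \<longrightarrow> g i * t i = t (i+1) * g i)
   \<and> (\<forall>i. 1 \<le> i \<and> i \<le> n - 1 \<longrightarrow> g i * t (i+1) = t i * g i)
   \<and> (\<forall>i j. 1 \<le> i \<and> i \<le> n - 1 \<and> 1 \<le> j \<and> j \<le> n \<and> j \<noteq> i \<and> j \<noteq> i + 1
        \<longrightarrow> g i * t j = t j * g i)
   \<and> (\<forall>i. 1 \<le> i \<and> i \<le> n - 1 \<longrightarrow>
        g i * g i = 1 + sc (u - 1) * yh_e sc d t i (i+1)
                      + sc (u - 1) * yh_e sc d t i (i+1) * g i)"

text \<open>g_{1,2} = sum over w in S_3 of g_w (reduced words 1, s1, s2, s1s2, s2s1, s1s2s1).\<close>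
definition yh_g12 :: "(nat \<Rightarrow> 'a::ring_1) \<Rightarrow> 'a" where
  "yh_g12 g = 1 + g 1 + g 2 + g 1 * g 2 + g 2 * g 1 + g 1 * g 2 * g 1"

definition yh_c12 :: "nat \<Rightarrow> (nat \<Rightarrow> 'a::ring_1) \<Rightarrow> (nat \<Rightarrow> 'a) \<Rightarrow> 'a" where
  "yh_c12 d g t = (\<Sum>a<d. \<Sum>b<d. \<Sum>c<d. t 1 ^ a * t 2 ^ b * t 3 ^ c) * yh_g12 g"

end

theory Submission
  imports Defs
begin

text \<open>
  The element c_{1,2} factors as T g_{1,2} with T = \<Sum> t_1^a t_2^b t_3^c. Since T is symmetric in
  t_1, t_2, t_3 and g_1, g_2 act on the t_i by transpositions, T commutes with g_1 and g_2.
  The quadratic relation says g_i (1 + g_i) = (1 + (u - 1) e_i) (1 + g_i), and g_{1,2} factors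
  both as (1 + g_1) (1 + g_2 + g_2 g_1) and, by the braid relation, as
  (1 + g_2) (1 + g_1 + g_1 g_2); this gives (1) and (2). For (3)-(5) one moves g_1 and g_2 past
  the idempotents e_1, e_2, e_{1,3}, which they permute, and uses
  e_1 e_{1,3} = e_2 e_{1,3} = e_1 e_2 and e_2^2 = e_2; these hold because e_{i,j} t_i = e_{i,j} t_j.
\<close>

definition commute :: "'a::ring_1 \<Rightarrow> 'a \<Rightarrow> bool" where
  "commute a b \<longleftrightarrow> a * b = b * a"

lemma commute_one_right [simp]: "commute a 1"
  unfolding commute_def by simp

lemma commute_mult_left: "commute a c \<Longrightarrow> commute b c \<Longrightarrow> commute (a * b) c"
  and commute_mult_right: "commute a b \<Longrightarrow> commute a c \<Longrightarrow> commute a (b * c)"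
  unfolding commute_def by (metis mult.assoc)+

lemma commute_add_left: "commute a c \<Longrightarrow> commute b c \<Longrightarrow> commute (a + b) c"
  and commute_add_right: "commute a b \<Longrightarrow> commute a c \<Longrightarrow> commute a (b + c)"
  unfolding commute_def by (simp_all add: distrib_left distrib_right)

lemma commute_power_left: "commute a b \<Longrightarrow> commute (a ^ n) b"
  and commute_power_right: "commute a b \<Longrightarrow> commute a (b ^ n)"
  unfolding commute_def by (metis power_commuting_commutes)+

lemma commute_sum_left: "(\<And>x. x \<in> A \<Longrightarrow> commute (f x) a) \<Longrightarrow> commute (sum f A) a"
  and commute_sum_right: "(\<And>x. x \<in> A \<Longrightarrow> commute a (f x)) \<Longrightarrow> commute a (sum f A)"
  unfolding commute_def by (simp_all add: sum_distrib_left sum_distrib_right)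

lemmas commute_intros =
  commute_mult_left commute_add_left commute_power_left commute_sum_left
  commute_mult_right commute_add_right commute_power_right commute_sum_right

lemma commute_powers: "commute x y \<Longrightarrow> commute (x ^ m) (y ^ n)"
  by (intro commute_power_left commute_power_right)

lemma power_conj:
  fixes g x y :: "'a::monoid_mult"
  assumes "g * x = y * g"
  shows "g * x ^ n = y ^ n * g"
proof (induction n)
  case (Suc n)
  have "g * x ^ Suc n = g * x * x ^ n" by (simp add: mult.assoc)
  also have "\<dots> = y * (g * x ^ n)" by (simp add: assms mult.assoc)
  also have "\<dots> = y ^ Suc n * g" by (simp add: Suc mult.assoc)
  finally show ?case .
qed simp

definition cyclic_sum :: "nat \<Rightarrow> 'a::ring_1 \<Rightarrow> 'a \<Rightarrow> 'a" where
  "cyclic_sum d x y = (\<Sum>s<d. x ^ s * y ^ (d - s))"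

lemma cyclic_sum_mult_eq:
  fixes x y :: "'a::ring_1"
  assumes "commute x y" and "x ^ d = 1" and "y ^ d = 1"
  shows "cyclic_sum d x y * x = cyclic_sum d x y * y"
proof -
  define f where "f s = x ^ s * y ^ (Suc d - s)" for s
  have "cyclic_sum d x y * x = (\<Sum>s<d. f (Suc s))"
    unfolding cyclic_sum_def sum_distrib_right f_def
    using commute_power_right[OF assms(1)] unfolding commute_def
    by (intro sum.cong) (simp_all add: mult.assoc power_Suc2 del: power_Suc)
  also have "\<dots> = (\<Sum>s<d. f s)"
  proof -
    have "f 0 = f d" using assms(2,3) by (simp add: f_def)
    then show ?thesis
      using sum.lessThan_Suc_shift[of f d] sum.lessThan_Suc[of f d] by (simp add: add.commute)
  qed
  also have "\<dots> = cyclic_sum d x y * y"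
    unfolding cyclic_sum_def sum_distrib_right f_def
    by (intro sum.cong) (simp_all add: Suc_diff_le mult.assoc power_Suc2 del: power_Suc)
  finally show ?thesis .
qed

lemma cyclic_sum_mult_power_eq:
  fixes x y :: "'a::ring_1"
  assumes "commute x y" and "x ^ d = 1" and "y ^ d = 1"
  shows "cyclic_sum d x y * x ^ r = cyclic_sum d x y * y ^ r"
proof (induction r)
  case (Suc r)
  have xy: "x * y ^ r = y ^ r * x"
    using commute_power_right[OF assms(1)] unfolding commute_def .
  have "cyclic_sum d x y * x ^ Suc r = cyclic_sum d x y * x ^ r * x"
    by (simp add: mult.assoc power_Suc2 del: power_Suc)
  also have "\<dots> = cyclic_sum d x y * x * y ^ r"
    by (simp add: Suc mult.assoc xy)
  also have "\<dots> = cyclic_sum d x y * y ^ Suc r"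
    by (simp add: cyclic_sum_mult_eq[OF assms] mult.assoc power_commutes)
  finally show ?case .
qed simp

lemma mult_cyclic_sum_absorb:
  fixes a x y :: "'a::ring_1"
  assumes "\<And>r. a * x ^ r = a * y ^ r" and "y ^ d = 1"
  shows "a * cyclic_sum d x y = of_nat d * a"
proof -
  have "a * (x ^ s * y ^ (d - s)) = a" if "s < d" for s
  proof -
    have "a * (x ^ s * y ^ (d - s)) = a * y ^ (s + (d - s))"
      by (simp add: assms(1) power_add mult.assoc[symmetric])
    then show ?thesis using that assms(2) by simp
  qed
  then show ?thesis
    unfolding cyclic_sum_def sum_distrib_left by simp
qed

lemma mult_cyclic_sum_left:
  fixes a x y z :: "'a::ring_1"
  assumes "\<And>r. a * x ^ r = a * y ^ r"
  shows "a * cyclic_sum d x z = a * cyclic_sum d y z"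
  unfolding cyclic_sum_def sum_distrib_left
  by (simp add: assms mult.assoc[symmetric])

lemma mult_cyclic_sum_right:
  fixes a x y z :: "'a::ring_1"
  assumes "\<And>r. a * z ^ r = a * y ^ r" and "commute a x"
  shows "a * cyclic_sum d x z = a * cyclic_sum d x y"
proof -
  have ax: "a * x ^ s = x ^ s * a" for s
    using commute_power_right[OF assms(2)] unfolding commute_def by simp
  show ?thesis
    unfolding cyclic_sum_def sum_distrib_left
    by (simp add: ax mult.assoc[symmetric]) (simp add: mult.assoc assms(1))
qed

lemma cyclic_sum_conj:
  fixes g x y x' y' :: "'a::ring_1"
  assumes "g * x = x' * g" and "g * y = y' * g"
  shows "g * cyclic_sum d x y = cyclic_sum d x' y' * g"
  unfolding cyclic_sum_def sum_distrib_left sum_distrib_right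
  by (simp add: mult.assoc[symmetric] power_conj[OF assms(1)])
     (simp add: mult.assoc power_conj[OF assms(2)])

definition triple_power_sum :: "nat \<Rightarrow> 'a::ring_1 \<Rightarrow> 'a \<Rightarrow> 'a \<Rightarrow> 'a" where
  "triple_power_sum d x y z = (\<Sum>a<d. \<Sum>b<d. \<Sum>c<d. x ^ a * y ^ b * z ^ c)"

lemma triple_power_sum_conj:
  fixes g x y z x' y' z' :: "'a::ring_1"
  assumes "g * x = x' * g" and "g * y = y' * g" and "g * z = z' * g"
  shows "g * triple_power_sum d x y z = triple_power_sum d x' y' z' * g"
  unfolding triple_power_sum_def sum_distrib_left sum_distrib_right
  by (simp add: mult.assoc[symmetric] power_conj[OF assms(1)])
     (simp add: mult.assoc power_conj[OF assms(2)] power_conj[OF assms(3)])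

lemma triple_power_sum_swap12:
  fixes x y z :: "'a::ring_1"
  assumes "commute x y"
  shows "triple_power_sum d y x z = triple_power_sum d x y z"
proof -
  have "y ^ a * x ^ b = x ^ b * y ^ a" for a b
    using commute_powers[OF assms] unfolding commute_def by simp
  then show ?thesis
    unfolding triple_power_sum_def by (subst sum.swap) simp
qed

lemma triple_power_sum_swap23:
  fixes x y z :: "'a::ring_1"
  assumes "commute y z"
  shows "triple_power_sum d x z y = triple_power_sum d x y z"
proof -
  have "z ^ b * y ^ c = y ^ c * z ^ b" for b c
    using commute_powers[OF assms] unfolding commute_def by simp
  then show ?thesis
    unfolding triple_power_sum_def by (subst (2) sum.swap) (simp add: mult.assoc)
qed

lemma mult_one_plus_quadratic:
  fixes g a :: "'a::ring_1"
  assumes "g * g = 1 + a + a * g"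
  shows "g * (1 + g) = (1 + a) * (1 + g)"
  by (simp add: assms algebra_simps)

lemma cplx_alg_one: "cplx_alg sc \<Longrightarrow> sc 1 = 1"
  and cplx_alg_add: "cplx_alg sc \<Longrightarrow> sc (x + y) = sc x + sc y"
  and cplx_alg_mult: "cplx_alg sc \<Longrightarrow> sc (x * y) = sc x * sc y"
  unfolding cplx_alg_def by blast+

lemma cplx_alg_commute:
  assumes "cplx_alg sc"
  shows "commute (sc x) a" and "commute a (sc x)"
  using assms unfolding cplx_alg_def commute_def by auto

lemma cplx_alg_of_nat:
  assumes "cplx_alg sc"
  shows "sc (of_nat m) = of_nat m"
proof (induction m)
  case 0
  have "sc 0 + sc 0 = sc 0 + 0" using cplx_alg_add[OF assms, of 0 0] by simp
  then show ?case by simp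
qed (simp_all add: cplx_alg_add[OF assms] cplx_alg_one[OF assms])

lemma cplx_alg_left_commute:
  assumes "cplx_alg sc"
  shows "a * (sc x * b) = sc x * (a * b)"
  using cplx_alg_commute(2)[OF assms] unfolding commute_def by (metis mult.assoc)

lemma yh_e_cyclic_sum: "yh_e sc d t i j = sc (1 / of_nat d) * cyclic_sum d (t i) (t j)"
  unfolding yh_e_def cyclic_sum_def ..

lemma cplx_alg_mult_scaled:
  assumes "cplx_alg sc"
  shows "sc a * x * (sc b * y) = sc (a * b) * (x * y)"
proof -
  have "x * sc b = sc b * x"
    using cplx_alg_commute(2)[OF assms] unfolding commute_def by simp
  then have "sc a * x * (sc b * y) = sc a * sc b * (x * y)"
    by (simp add: mult.assoc) (simp add: mult.assoc[symmetric])
  then show ?thesis by (simp add: cplx_alg_mult[OF assms])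
qed

lemma yh_e_conj:
  assumes "cplx_alg sc" and "g * t i = t i' * g" and "g * t j = t j' * g"
  shows "g * yh_e sc d t i j = yh_e sc d t i' j' * g"
proof -
  have "g * sc (1 / of_nat d) = sc (1 / of_nat d) * g"
    using cplx_alg_commute(2)[OF assms(1)] unfolding commute_def by simp
  then show ?thesis
    unfolding yh_e_cyclic_sum
    by (simp add: mult.assoc[symmetric]) (simp add: mult.assoc cyclic_sum_conj[OF assms(2,3)])
qed

lemma yh_e_idem:
  assumes "cplx_alg sc" and "d \<ge> 1" and "commute (t i) (t j)"
    and "t i ^ d = 1" and "t j ^ d = 1"
  shows "yh_e sc d t i j * yh_e sc d t i j = yh_e sc d t i j"
proof -
  have "cyclic_sum d (t i) (t j) * cyclic_sum d (t i) (t j) = of_nat d * cyclic_sum d (t i) (t j)"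
    using assms(3-5)
    by (intro mult_cyclic_sum_absorb cyclic_sum_mult_power_eq) simp_all
  moreover have "sc (1 / of_nat d * (1 / of_nat d)) * of_nat d = sc (1 / of_nat d)"
    using assms(2) by (simp flip: cplx_alg_of_nat[OF assms(1)] cplx_alg_mult[OF assms(1)])
  ultimately show ?thesis
    unfolding yh_e_cyclic_sum cplx_alg_mult_scaled[OF assms(1)]
    by (simp only: mult.assoc[symmetric])
qed

lemma yh_e_mult_left:
  assumes "cplx_alg sc" and "commute (t i) (t j)" and "t i ^ d = 1" and "t j ^ d = 1"
  shows "yh_e sc d t i j * yh_e sc d t i k = yh_e sc d t i j * yh_e sc d t j k"
proof -
  have "cyclic_sum d (t i) (t j) * cyclic_sum d (t i) (t k)
      = cyclic_sum d (t i) (t j) * cyclic_sum d (t j) (t k)"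
    using assms(2-4) by (intro mult_cyclic_sum_left cyclic_sum_mult_power_eq) simp_all
  then show ?thesis
    unfolding yh_e_cyclic_sum cplx_alg_mult_scaled[OF assms(1)] by simp
qed

lemma yh_e_mult_right:
  assumes "cplx_alg sc" and "commute (t j) (t k)" and "t j ^ d = 1" and "t k ^ d = 1"
    and "commute (t j) (t i)" and "commute (t k) (t i)"
  shows "yh_e sc d t j k * yh_e sc d t i k = yh_e sc d t j k * yh_e sc d t i j"
proof -
  have "commute (cyclic_sum d (t j) (t k)) (t i)"
    unfolding cyclic_sum_def using assms(5,6)
    by (intro commute_intros) simp_all
  then have "cyclic_sum d (t j) (t k) * cyclic_sum d (t i) (t k)
      = cyclic_sum d (t j) (t k) * cyclic_sum d (t i) (t j)"
    using assms(2-4)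
    by (intro mult_cyclic_sum_right cyclic_sum_mult_power_eq[symmetric]) simp_all
  then show ?thesis
    unfolding yh_e_cyclic_sum cplx_alg_mult_scaled[OF assms(1)] by simp
qed

lemma yh_g12_factor_left: "yh_g12 g = (1 + g 1) * (1 + g 2 + g 2 * g 1)"
  unfolding yh_g12_def by (simp add: algebra_simps)

lemma yh_g12_factor_right:
  assumes "g 2 * g 1 * g 2 = g 1 * g 2 * g 1"
  shows "yh_g12 g = (1 + g 2) * (1 + g 1 + g 1 * g 2)"
  unfolding yh_g12_def by (simp add: algebra_simps assms[unfolded mult.assoc] del: One_nat_def)

lemma mult_eq_assoc:
  fixes a b c x :: "'a::semigroup_mult"
  shows "a * b = c \<Longrightarrow> a * (b * x) = c * x"
  by (simp add: mult.assoc[symmetric])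

lemma mult_commuting_factor:
  fixes g a b c :: "'a::ring_1"
  assumes "g * a = a * g" and "g * b = c * b" and "commute a c"
  shows "g * (a * b) = c * (a * b)"
  using assms unfolding commute_def by (metis mult.assoc)

locale yh_three_strands =
  fixes sc :: "complex \<Rightarrow> 'a::ring_1" and d :: nat and u :: complex and g t :: "nat \<Rightarrow> 'a"
  assumes cplx_alg: "cplx_alg sc" and d_ge_1: "d \<ge> 1"
    and braid: "g 2 * g 1 * g 2 = g 1 * g 2 * g 1"
    and t_commute: "\<lbrakk>i \<in> {1, 2, 3}; j \<in> {1, 2, 3}\<rbrakk> \<Longrightarrow> commute (t i) (t j)"
    and t_power_d: "i \<in> {1, 2, 3} \<Longrightarrow> t i ^ d = 1"
    and g1_t1: "g 1 * t 1 = t 2 * g 1" and g1_t2: "g 1 * t 2 = t 1 * g 1"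
    and g1_t3: "g 1 * t 3 = t 3 * g 1"
    and g2_t1: "g 2 * t 1 = t 1 * g 2" and g2_t2: "g 2 * t 2 = t 3 * g 2"
    and g2_t3: "g 2 * t 3 = t 2 * g 2"
    and g1_quadratic:
      "g 1 * g 1 = 1 + sc (u - 1) * yh_e sc d t 1 2 + sc (u - 1) * yh_e sc d t 1 2 * g 1"
    and g2_quadratic:
      "g 2 * g 2 = 1 + sc (u - 1) * yh_e sc d t 2 3 + sc (u - 1) * yh_e sc d t 2 3 * g 2"
begin

declare One_nat_def [simp del] \<comment> \<open>keep \<open>g 1\<close> from being rewritten to \<open>g (Suc 0)\<close>\<close>

abbreviation "v \<equiv> sc (u - 1)"
abbreviation "e1 \<equiv> yh_e sc d t 1 2"
abbreviation "e2 \<equiv> yh_e sc d t 2 3"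
abbreviation "e13 \<equiv> yh_e sc d t 1 3"
abbreviation "T \<equiv> triple_power_sum d (t 1) (t 2) (t 3)"

lemma yh_c12_eq: "yh_c12 d g t = T * yh_g12 g"
  unfolding yh_c12_def triple_power_sum_def ..

lemma g1_commute_T: "g 1 * T = T * g 1"
  using triple_power_sum_conj[OF g1_t1 g1_t2 g1_t3] triple_power_sum_swap12[OF t_commute]
  by simp

lemma g2_commute_T: "g 2 * T = T * g 2"
  using triple_power_sum_conj[OF g2_t1 g2_t2 g2_t3] triple_power_sum_swap23[OF t_commute]
  by simp

lemma commute_t_yh_e:
  assumes "i \<in> {1, 2, 3}" and "j \<in> {1, 2, 3}" and "k \<in> {1, 2, 3}"
  shows "commute (t k) (yh_e sc d t i j)"
  unfolding yh_e_cyclic_sum cyclic_sum_def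
  using assms t_commute cplx_alg_commute[OF cplx_alg] by (intro commute_intros) auto

lemma commute_T_yh_e:
  assumes "i \<in> {1, 2, 3}" and "j \<in> {1, 2, 3}"
  shows "commute T (yh_e sc d t i j)"
  unfolding triple_power_sum_def
  using assms by (intro commute_intros) (simp_all add: commute_t_yh_e)

lemma commute_yh_e:
  assumes "i \<in> {1, 2, 3}" and "j \<in> {1, 2, 3}" and "k \<in> {1, 2, 3}" and "l \<in> {1, 2, 3}"
  shows "commute (yh_e sc d t i j) (yh_e sc d t k l)"
  unfolding yh_e_cyclic_sum[of sc d t i j] cyclic_sum_def
  using assms by (intro commute_intros) (simp_all add: commute_t_yh_e cplx_alg_commute[OF cplx_alg])

lemma commute_T_one_plus_v_yh_e:
  assumes "i \<in> {1, 2, 3}" and "j \<in> {1, 2, 3}"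
  shows "commute T (1 + v * yh_e sc d t i j)"
  using commute_T_yh_e[OF assms] cplx_alg_commute[OF cplx_alg]
  by (intro commute_intros) simp_all

lemma g1_yh_c12: "g 1 * yh_c12 d g t = (1 + v * e1) * yh_c12 d g t"
proof -
  have "g 1 * yh_g12 g = (1 + v * e1) * yh_g12 g"
    unfolding yh_g12_factor_left mult.assoc[symmetric]
    using mult_one_plus_quadratic[OF g1_quadratic] by simp
  then show ?thesis
    unfolding yh_c12_eq
    by (intro mult_commuting_factor g1_commute_T commute_T_one_plus_v_yh_e) simp_all
qed

lemma g2_yh_c12: "g 2 * yh_c12 d g t = (1 + v * e2) * yh_c12 d g t"
proof -
  have "g 2 * yh_g12 g = (1 + v * e2) * yh_g12 g"
    unfolding yh_g12_factor_right[OF braid] mult.assoc[symmetric]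
    using mult_one_plus_quadratic[OF g2_quadratic] by simp
  then show ?thesis
    unfolding yh_c12_eq
    by (intro mult_commuting_factor g2_commute_T commute_T_one_plus_v_yh_e) simp_all
qed

lemma g1_e2: "g 1 * e2 = e13 * g 1"
  by (rule yh_e_conj[OF cplx_alg g1_t2 g1_t3])

lemma g2_e1: "g 2 * e1 = e13 * g 2"
  by (rule yh_e_conj[OF cplx_alg g2_t1 g2_t2])

lemma g1_e13: "g 1 * e13 = e2 * g 1"
  by (rule yh_e_conj[OF cplx_alg g1_t1 g1_t3])

lemma e2_idem: "e2 * e2 = e2"
  by (rule yh_e_idem[OF cplx_alg d_ge_1 t_commute t_power_d t_power_d]) simp_all

lemma e2_e1: "e2 * e1 = e1 * e2"
  using commute_yh_e[of 1 2 2 3] unfolding commute_def by simp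

lemma e13_e1: "e13 * e1 = e1 * e2"
proof -
  have "e1 * e13 = e1 * e2"
    by (rule yh_e_mult_left[OF cplx_alg t_commute t_power_d t_power_d]) simp_all
  then show ?thesis using commute_yh_e[of 1 2 1 3] unfolding commute_def by simp
qed

lemma e2_e13: "e2 * e13 = e1 * e2"
proof -
  have "e2 * e13 = e2 * e1"
    by (rule yh_e_mult_right[OF cplx_alg]) (simp_all add: t_commute t_power_d)
  then show ?thesis by (simp add: e2_e1)
qed

lemma e13_e2: "e13 * e2 = e1 * e2"
  using e2_e13 commute_yh_e[of 1 3 2 3] unfolding commute_def by simp

lemma g1_g2_yh_c12:
  "g 1 * g 2 * yh_c12 d g t = (1 + v * e1 + v * e13 + v ^ 2 * e1 * e2) * yh_c12 d g t"
proof -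
  let ?c = "yh_c12 d g t"
  have "g 1 * g 2 * ?c = g 1 * ?c + v * (e13 * (g 1 * ?c))"
    by (simp add: mult.assoc g2_yh_c12 distrib_left distrib_right cplx_alg_left_commute[OF cplx_alg])
       (simp add: g1_e2 mult.assoc[symmetric])
  also have "\<dots> = (1 + v * e1 + v * e13 + v ^ 2 * e1 * e2) * ?c"
    by (simp add: g1_yh_c12 algebra_simps power2_eq_square cplx_alg_left_commute[OF cplx_alg, of e13]
        mult_eq_assoc[OF e13_e1])
  finally show ?thesis .
qed

lemma g2_g1_yh_c12:
  "g 2 * g 1 * yh_c12 d g t = (1 + v * e2 + v * e13 + v ^ 2 * e1 * e2) * yh_c12 d g t"
proof -
  let ?c = "yh_c12 d g t"
  have "g 2 * g 1 * ?c = g 2 * ?c + v * (e13 * (g 2 * ?c))"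
    by (simp add: mult.assoc g1_yh_c12 distrib_left distrib_right cplx_alg_left_commute[OF cplx_alg])
       (simp add: g2_e1 mult.assoc[symmetric])
  also have "\<dots> = (1 + v * e2 + v * e13 + v ^ 2 * e1 * e2) * ?c"
    by (simp add: g2_yh_c12 algebra_simps power2_eq_square cplx_alg_left_commute[OF cplx_alg, of e13]
        mult_eq_assoc[OF e13_e2])
  finally show ?thesis .
qed

lemma scalar_u_plus_2: "sc (u + 2) = v + 1 + 1 + 1"
proof -
  have "u + 2 = (u - 1) + 1 + 1 + 1" by simp
  then show ?thesis by (simp only: cplx_alg_add[OF cplx_alg] cplx_alg_one[OF cplx_alg])
qed

lemma g1_g2_g1_yh_c12:
  "g 1 * g 2 * g 1 * yh_c12 d g t
     = (1 + v * (e1 + e2 + e13) + v ^ 2 * sc (u + 2) * e1 * e2) * yh_c12 d g t"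
proof -
  let ?c = "yh_c12 d g t"
  have "g 1 * g 2 * e1 = e2 * (g 1 * g 2)"
    by (simp add: mult.assoc g2_e1) (simp add: mult.assoc[symmetric] g1_e13)
  then have "g 1 * g 2 * g 1 * ?c = g 1 * g 2 * ?c + v * (e2 * (g 1 * g 2 * ?c))"
    by (simp add: mult.assoc g1_yh_c12 distrib_left distrib_right cplx_alg_left_commute[OF cplx_alg])
       (simp add: mult.assoc[symmetric])
  also have "\<dots> = (1 + v * (e1 + e2 + e13) + v ^ 2 * sc (u + 2) * e1 * e2) * ?c"
    by (simp add: g1_g2_yh_c12[unfolded mult.assoc] scalar_u_plus_2 algebra_simps power2_eq_square
        cplx_alg_left_commute[OF cplx_alg, of e2] mult_eq_assoc[OF e2_e1] mult_eq_assoc[OF e2_e13]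
        mult_eq_assoc[OF e2_idem])
  finally show ?thesis .
qed

end

lemma yh_rels_three_strands:
  assumes "yh_rels sc d n u g t" and "n \<ge> 3" and "cplx_alg sc" and "d \<ge> 1"
  shows "yh_three_strands sc d u g t"
proof -
  from assms(1) have
    braid: "\<And>i. \<lbrakk>1 \<le> i; i + 1 \<le> n - 1\<rbrakk> \<Longrightarrow>
      g (i+1) * g i * g (i+1) = g i * g (i+1) * g i"
    and t_commute: "\<And>i j. \<lbrakk>1 \<le> i; i \<le> n; 1 \<le> j; j \<le> n\<rbrakk> \<Longrightarrow> t i * t j = t j * t i"
    and t_power: "\<And>i. \<lbrakk>1 \<le> i; i \<le> n\<rbrakk> \<Longrightarrow> t i ^ d = 1"
    and g_t_same: "\<And>i. \<lbrakk>1 \<le> i; i \<le> n - 1\<rbrakk> \<Longrightarrow> g i * t i = t (i+1) * g i"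
    and g_t_next: "\<And>i. \<lbrakk>1 \<le> i; i \<le> n - 1\<rbrakk> \<Longrightarrow> g i * t (i+1) = t i * g i"
    and g_t_far: "\<And>i j. \<lbrakk>1 \<le> i; i \<le> n - 1; 1 \<le> j; j \<le> n; j \<noteq> i; j \<noteq> i + 1\<rbrakk> \<Longrightarrow>
      g i * t j = t j * g i"
    and quadratic: "\<And>i. \<lbrakk>1 \<le> i; i \<le> n - 1\<rbrakk> \<Longrightarrow>
      g i * g i = 1 + sc (u - 1) * yh_e sc d t i (i+1) + sc (u - 1) * yh_e sc d t i (i+1) * g i"
    unfolding yh_rels_def by blast+
  show ?thesis
    using assms(2) braid[of 1] t_power g_t_same[of 1] g_t_same[of 2] g_t_next[of 1] g_t_next[of 2]
      g_t_far[of 1 3] g_t_far[of 2 1] quadratic[of 1] quadratic[of 2]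
    by unfold_locales (auto simp: assms(3,4) commute_def t_commute simp del: One_nat_def)
qed

theorem lemma6:
  fixes sc :: "complex \<Rightarrow> 'a::ring_1" and g t :: "nat \<Rightarrow> 'a"
    and d n :: nat and u :: complex
  assumes "d \<ge> 1" and "n \<ge> 3" and "u \<noteq> 0"
    and "cplx_alg sc" and "yh_rels sc d n u g t"
  defines "e1 \<equiv> yh_e sc d t 1 2" and "e2 \<equiv> yh_e sc d t 2 3"
    and "e13 \<equiv> yh_e sc d t 1 3" and "c \<equiv> yh_c12 d g t" and "v \<equiv> sc (u - 1)"
  shows "g 1 * c = (1 + v * e1) * c \<and>
         g 2 * c = (1 + v * e2) * c \<and>
         g 1 * g 2 * c = (1 + v * e1 + v * e13 + v ^ 2 * e1 * e2) * c \<and>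
         g 2 * g 1 * c = (1 + v * e2 + v * e13 + v ^ 2 * e1 * e2) * c \<and>
         g 1 * g 2 * g 1 * c = (1 + v * (e1 + e2 + e13) + v ^ 2 * sc (u + 2) * e1 * e2) * c"
proof -
  interpret yh_three_strands sc d u g t
    using yh_rels_three_strands[OF assms(5,2,4,1)] .
  show ?thesis
    unfolding e1_def e2_def e13_def c_def v_def
    using g1_yh_c12 g2_yh_c12 g1_g2_yh_c12 g2_g1_yh_c12 g1_g2_g1_yh_c12 by blast
qed

end
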